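(* Assume the vector variational inequality defined by $F$ and $K$ is monotone. (a) If the proper Pareto solution set $\mathrm{Sol}^{pr}(F,K)$ is disconnected, then each connected component of $\mathrm{Sol}^{pr}(F,K)$ is unbounded. (b) If $\mathrm{Sol}^{pr}(F,K)$ is bounded and nonempty, then it is connected.
   Context: Let $K\subset\mathbb{R}^n$ be a nonempty closed convex set and $F_1,\dots,F_m:K\to\mathbb{R}^n$ continuous functions. The problem is monotone if each $F_l$ is monotone on $K$: $\langle F_l(y)-F_l(x),y-x\rangle\ge0$ for all $x,y\in K$. Let $\Delta=\{\xi\in\mathbb{R}^m_+:\sum_l\xi_l=1\}$, $\operatorname{ri}\Delta=\{\xi\in\Delta:\xi_l>0,\ l=1,\dots,m\}$ and $F_\xi=\sum_l\xi_lF_l$. For $G:K\to\mathbb{R}^n$, $\mathrm{Sol}(G,K)=\{x\in K:\langle G(x),y-x\rangle\ge0\ \forall y\in K\}$. The proper Pareto solution set is $\mathrm{Sol}^{pr}(F,K)=\bigcup_{\xi\in\operatorname{ri}\Delta}\mathrm{Sol}(F_\xi,K)$. *)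

theory Defs
  imports "HOL-Analysis.Analysis"
begin

definition VI_Sol :: "('a::real_inner \<Rightarrow> 'a) \<Rightarrow> 'a set \<Rightarrow> 'a set" where
  "VI_Sol G K = {x \<in> K. \<forall>y\<in>K. G x \<bullet> (y - x) \<ge> 0}"

definition ri_simplex :: "nat \<Rightarrow> (nat \<Rightarrow> real) set" where
  "ri_simplex m = {\<xi>. (\<forall>l<m. \<xi> l > 0) \<and> (\<Sum>l<m. \<xi> l) = 1}"

definition F_xi :: "nat \<Rightarrow> (nat \<Rightarrow> 'a \<Rightarrow> 'a::real_vector) \<Rightarrow> (nat \<Rightarrow> real) \<Rightarrow> 'a \<Rightarrow> 'a" where
  "F_xi m F \<xi> x = (\<Sum>l<m. \<xi> l *\<^sub>R F l x)"

definition Sol_pr :: "nat \<Rightarrow> (nat \<Rightarrow> 'a \<Rightarrow> 'a::real_inner) \<Rightarrow> 'a set \<Rightarrow> 'a set" where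
  "Sol_pr m F K = (\<Union>\<xi>\<in>ri_simplex m. VI_Sol (F_xi m F \<xi>) K)"

definition monotone_on_K :: "('a::real_inner \<Rightarrow> 'a) \<Rightarrow> 'a set \<Rightarrow> bool" where
  "monotone_on_K G K \<longleftrightarrow> (\<forall>x\<in>K. \<forall>y\<in>K. (G y - G x) \<bullet> (y - x) \<ge> 0)"

end

theory Submission
  imports Defs
begin

text \<open>For a continuous monotone map G on a closed convex set K, Minty's lemma makes Sol(G,K)
  convex. If Sol(G,K) is nonempty and bounded, the truncated problem on K \<inter> cball 0 R (R large)
  has no solution on the sphere of radius R; this persists under small perturbations of G, and
  then Hartman--Stampacchia on the truncation together with convexity gives nonempty solution sets
  inside one ball. Along a segment t \<mapsto> (1 - t) \<xi>0 + t \<xi>1 in the relative interior of the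
  simplex, the set of t for which Sol(F_\<xi>,K) meets a bounded component C of the proper Pareto
  solution set is therefore closed (by compactness) and open (by this stability and the
  connectedness of the union of nearby solution sets), hence all of [0,1]. So every Sol(F_\<xi>,K)
  lies in C, i.e. the whole set equals C and is connected; part (b) follows from part (a).\<close>

lemma VI_Sol_subset: "VI_Sol G K \<subseteq> K"
  unfolding VI_Sol_def by auto

lemma VI_Sol_restrict:
  assumes "x \<in> VI_Sol G K" "x \<in> K'" "K' \<subseteq> K"
  shows "x \<in> VI_Sol G K'"
  using assms unfolding VI_Sol_def by auto

lemma monotone_on_K_subset:
  "monotone_on_K G K \<Longrightarrow> K' \<subseteq> K \<Longrightarrow> monotone_on_K G K'"
  unfolding monotone_on_K_def by blast

lemma Minty_imp_VI_Sol:
  assumes "convex K" "continuous_on K G" "x \<in> K" "\<forall>y\<in>K. G y \<bullet> (y - x) \<ge> 0"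
  shows "x \<in> VI_Sol G K"
proof -
  have "G x \<bullet> (y - x) \<ge> 0" if y: "y \<in> K" for y
  proof -
    define p where "p = (\<lambda>t::real. x + t *\<^sub>R (y - x))"
    have pK: "p t \<in> K" if "t \<in> {0..1}" for t
    proof -
      have "p t = (1 - t) *\<^sub>R x + t *\<^sub>R y" unfolding p_def by (simp add: algebra_simps)
      then show ?thesis using assms(1,3) y that unfolding convex_alt by auto
    qed
    have pos: "G (p t) \<bullet> (y - x) \<ge> 0" if "t \<in> {0<..1}" for t
    proof -
      have "0 \<le> G (p t) \<bullet> (p t - x)" using assms(4) pK[of t] that by auto
      also have "\<dots> = t * (G (p t) \<bullet> (y - x))" unfolding p_def by simp
      finally show ?thesis using that by (simp add: zero_le_mult_iff)
    qed
    have cp: "continuous_on {0..1} p" unfolding p_def by (intro continuous_intros)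
    have "continuous_on {0..1} (\<lambda>t. G (p t) \<bullet> (y - x))"
      by (intro continuous_intros continuous_on_compose2[OF assms(2) cp]) (use pK in auto)
    then have "((\<lambda>t. G (p t) \<bullet> (y - x)) \<longlongrightarrow> G (p 0) \<bullet> (y - x)) (at 0 within {0..1})"
      by (simp add: continuous_on_def)
    then have "((\<lambda>t. G (p t) \<bullet> (y - x)) \<longlongrightarrow> G (p 0) \<bullet> (y - x)) (at_right 0)"
      using at_within_Icc_at_right[of "0::real" 1] by simp
    moreover have "eventually (\<lambda>t. 0 \<le> G (p t) \<bullet> (y - x)) (at_right (0::real))"
      unfolding eventually_at_right_field by (intro exI[of _ 1]) (auto intro!: pos)
    ultimately have "0 \<le> G (p 0) \<bullet> (y - x)"
      by (rule tendsto_lowerbound) simp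
    then show ?thesis unfolding p_def by simp
  qed
  then show ?thesis using assms(3) unfolding VI_Sol_def by auto
qed

lemma VI_Sol_eq_Minty:
  assumes "convex K" "continuous_on K G" "monotone_on_K G K"
  shows "VI_Sol G K = {x\<in>K. \<forall>y\<in>K. G y \<bullet> (y - x) \<ge> 0}"
proof
  show "VI_Sol G K \<subseteq> {x\<in>K. \<forall>y\<in>K. G y \<bullet> (y - x) \<ge> 0}"
  proof (intro subsetI CollectI conjI ballI)
    fix x y assume x: "x \<in> VI_Sol G K" and y: "y \<in> K"
    then have "0 \<le> (G y - G x) \<bullet> (y - x)" "0 \<le> G x \<bullet> (y - x)"
      using assms(3) unfolding monotone_on_K_def VI_Sol_def by auto
    then show "0 \<le> G y \<bullet> (y - x)" by (simp add: inner_diff_left)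
  qed (use VI_Sol_subset in blast)
  show "{x\<in>K. \<forall>y\<in>K. G y \<bullet> (y - x) \<ge> 0} \<subseteq> VI_Sol G K"
    using Minty_imp_VI_Sol[OF assms(1,2)] by auto
qed

lemma convex_VI_Sol:
  assumes "convex K" "continuous_on K G" "monotone_on_K G K"
  shows "convex (VI_Sol G K)"
  unfolding VI_Sol_eq_Minty[OF assms] convex_alt
proof (intro ballI allI impI CollectI conjI)
  fix x z :: 'a and u :: real
  assume x: "x \<in> {x\<in>K. \<forall>y\<in>K. 0 \<le> G y \<bullet> (y - x)}" and z: "z \<in> {x\<in>K. \<forall>y\<in>K. 0 \<le> G y \<bullet> (y - x)}"
    and u: "0 \<le> u \<and> u \<le> 1"
  show "(1 - u) *\<^sub>R x + u *\<^sub>R z \<in> K" using assms(1) x z u unfolding convex_alt by auto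
  fix y assume y: "y \<in> K"
  have "G y \<bullet> (y - ((1 - u) *\<^sub>R x + u *\<^sub>R z)) = (1 - u) * (G y \<bullet> (y - x)) + u * (G y \<bullet> (y - z))"
    by (simp add: algebra_simps)
  also have "\<dots> \<ge> 0" using x z y u by (intro add_nonneg_nonneg mult_nonneg_nonneg) auto
  finally show "0 \<le> G y \<bullet> (y - ((1 - u) *\<^sub>R x + u *\<^sub>R z))" .
qed

lemma VI_Sol_Int_cball_imp_VI_Sol:
  assumes "convex K" "x \<in> VI_Sol G (K \<inter> cball 0 R)" "norm x < R"
  shows "x \<in> VI_Sol G K"
proof -
  have xK: "x \<in> K" using assms(2) VI_Sol_subset by blast
  have "G x \<bullet> (y - x) \<ge> 0" if y: "y \<in> K" and "y \<noteq> x" for y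
  proof -
    have ny: "norm (y - x) > 0" using \<open>y \<noteq> x\<close> by simp
    define s where "s = min 1 ((R - norm x) / norm (y - x))"
    have s: "0 < s" "s \<le> 1" "s * norm (y - x) \<le> R - norm x"
      unfolding s_def using assms(3) ny by (auto simp: min_def field_simps)
    define z where "z = x + s *\<^sub>R (y - x)"
    have "norm z \<le> norm x + s * norm (y - x)"
      unfolding z_def using s(1) by (metis abs_of_pos norm_scaleR norm_triangle_ineq)
    then have "z \<in> cball 0 R" using s(3) by simp
    moreover have "z \<in> K"
      using assms(1) xK y s(1,2) unfolding convex_alt z_def by (simp add: algebra_simps)
    ultimately have "0 \<le> G x \<bullet> (z - x)" using assms(2) unfolding VI_Sol_def by auto
    also have "\<dots> = s * (G x \<bullet> (y - x))" unfolding z_def by simp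
    finally show ?thesis using s(1) by (simp add: zero_le_mult_iff)
  qed
  then show ?thesis using xK unfolding VI_Sol_def by fastforce
qed

text \<open>Hartman--Stampacchia: a Brouwer fixed point of x \<mapsto> P_K(x - G x), with P_K the
  projection onto K, solves the VI.\<close>
lemma VI_Sol_nonempty_compact:
  fixes G :: "'a::euclidean_space \<Rightarrow> 'a"
  assumes "compact K" "convex K" "K \<noteq> {}" "continuous_on K G"
  shows "VI_Sol G K \<noteq> {}"
proof -
  have cK: "closed K" using assms(1) compact_imp_closed by auto
  define f where "f = (\<lambda>x. closest_point K (x - G x))"
  have "continuous_on K f" unfolding f_def
    by (intro continuous_on_compose2[OF continuous_on_closest_point[OF assms(2) cK assms(3)]]
        continuous_intros assms(4)) auto
  moreover have "f \<in> K \<rightarrow> K" unfolding f_def using closest_point_in_set[OF cK assms(3)] by auto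
  ultimately obtain x where x: "x \<in> K" "f x = x"
    using brouwer[OF assms(1,2,3)] by metis
  have "G x \<bullet> (y - x) \<ge> 0" if "y \<in> K" for y
    using closest_point_dot[OF assms(2) cK that, of "x - G x"] x(2) unfolding f_def
    by simp
  then show ?thesis using x unfolding VI_Sol_def by auto
qed

lemma convex_norm_intermediate:
  fixes V :: "'a::real_normed_vector set"
  assumes "convex V" "z \<in> V" "w \<in> V" "norm z \<le> r" "r \<le> norm w"
  shows "\<exists>u\<in>V. norm u = r"
proof -
  define f where "f = (\<lambda>t::real. norm ((1 - t) *\<^sub>R z + t *\<^sub>R w))"
  have "continuous_on {0..1} f" unfolding f_def by (intro continuous_intros)
  then obtain t where t: "0 \<le> t" "t \<le> 1" "f t = r"
    using IVT'[of f 0 r 1] assms(4,5) unfolding f_def by auto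
  then show ?thesis using assms(1-3) unfolding f_def convex_alt by auto
qed

lemma VI_Sol_Int_cball_sphere_free:
  fixes K :: "'a::euclidean_space set"
  assumes "convex K" "continuous_on K G" "monotone_on_K G K"
    and "VI_Sol G K \<noteq> {}" "VI_Sol G K \<subseteq> ball 0 r" "r < R"
  shows "VI_Sol G (K \<inter> cball 0 R) \<inter> sphere 0 R = {}"
proof (rule ccontr)
  let ?KR = "K \<inter> cball 0 R"
  assume "VI_Sol G ?KR \<inter> sphere 0 R \<noteq> {}"
  then obtain z where z: "z \<in> VI_Sol G ?KR" "z \<in> sphere 0 R" by blast
  obtain x where x: "x \<in> VI_Sol G K" using assms(4) by blast
  have "norm x < r" using x assms(5) by auto
  moreover have "x \<in> K" using x VI_Sol_subset by blast
  ultimately have "x \<in> VI_Sol G ?KR"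
    using VI_Sol_restrict[OF x _ Int_lower1] assms(6) by simp
  moreover have "convex (VI_Sol G ?KR)"
    using assms(1-3) by (intro convex_VI_Sol)
      (auto intro: convex_Int continuous_on_subset monotone_on_K_subset)
  ultimately obtain u where u: "u \<in> VI_Sol G ?KR" "norm u = r"
    using convex_norm_intermediate[of _ x z r] z \<open>norm x < r\<close> assms(6) by fastforce
  then have "u \<in> VI_Sol G K" using VI_Sol_Int_cball_imp_VI_Sol[OF assms(1)] assms(6) by auto
  then show False using assms(5) u(2) by auto
qed

lemma VI_Sol_nonempty_bounded_if_sphere_free:
  fixes K :: "'a::euclidean_space set"
  assumes "closed K" "convex K" "continuous_on K G" "monotone_on_K G K"
    and "K \<inter> cball 0 R \<noteq> {}" "VI_Sol G (K \<inter> cball 0 R) \<inter> sphere 0 R = {}"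
  shows "VI_Sol G K \<noteq> {} \<and> VI_Sol G K \<subseteq> cball 0 R"
proof -
  let ?KR = "K \<inter> cball 0 R"
  have "compact ?KR" "convex ?KR" using assms(1,2) by (auto intro: convex_Int)
  moreover have "continuous_on ?KR G" using assms(3) by (rule continuous_on_subset) blast
  ultimately obtain z where z: "z \<in> VI_Sol G ?KR"
    using VI_Sol_nonempty_compact[of ?KR G] assms(5) by blast
  then have "norm z < R" using assms(6) VI_Sol_subset[of G ?KR] by fastforce
  then have zK: "z \<in> VI_Sol G K" using VI_Sol_Int_cball_imp_VI_Sol[OF assms(2) z] by blast
  have "norm w \<le> R" if w: "w \<in> VI_Sol G K" for w
  proof (rule ccontr)
    assume "\<not> norm w \<le> R"
    then obtain u where "u \<in> VI_Sol G K" "norm u = R"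
      using convex_norm_intermediate[OF convex_VI_Sol[OF assms(2-4)] zK w, of R] \<open>norm z < R\<close>
      by auto
    moreover have "u \<in> K" using \<open>u \<in> VI_Sol G K\<close> VI_Sol_subset by blast
    ultimately have "u \<in> VI_Sol G ?KR \<inter> sphere 0 R"
      using VI_Sol_restrict[OF \<open>u \<in> VI_Sol G K\<close> _ Int_lower1] by simp
    then show False using assms(6) by blast
  qed
  then show ?thesis using zK by auto
qed

definition linear_homotopy :: "('a::real_vector \<Rightarrow> 'a) \<Rightarrow> ('a \<Rightarrow> 'a) \<Rightarrow> real \<Rightarrow> 'a \<Rightarrow> 'a" where
  "linear_homotopy G0 G1 t x = (1 - t) *\<^sub>R G0 x + t *\<^sub>R G1 x"

lemma linear_homotopy_0 [simp]: "linear_homotopy G0 G1 0 = G0"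
  and linear_homotopy_1 [simp]: "linear_homotopy G0 G1 1 = G1"
  by (auto simp: linear_homotopy_def)

lemma continuous_on_linear_homotopy:
  fixes G0 :: "'a::real_normed_vector \<Rightarrow> 'a"
  assumes "continuous_on K G0" "continuous_on K G1"
  shows "continuous_on K (linear_homotopy G0 G1 t)"
  unfolding linear_homotopy_def by (intro continuous_intros assms)

lemma monotone_on_K_linear_homotopy:
  assumes "monotone_on_K G0 K" "monotone_on_K G1 K" "t \<in> {0..1}"
  shows "monotone_on_K (linear_homotopy G0 G1 t) K"
  unfolding monotone_on_K_def
proof (intro ballI)
  fix x y assume x: "x \<in> K" and y: "y \<in> K"
  have "(linear_homotopy G0 G1 t y - linear_homotopy G0 G1 t x) \<bullet> (y - x)
      = (1 - t) * ((G0 y - G0 x) \<bullet> (y - x)) + t * ((G1 y - G1 x) \<bullet> (y - x))"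
    unfolding linear_homotopy_def by (simp add: algebra_simps)
  also have "\<dots> \<ge> 0" using assms x y unfolding monotone_on_K_def
    by (intro add_nonneg_nonneg mult_nonneg_nonneg) auto
  finally show "0 \<le> (linear_homotopy G0 G1 t y - linear_homotopy G0 G1 t x) \<bullet> (y - x)" .
qed

lemma connected_VI_Sol_linear_homotopy:
  assumes "convex K" "continuous_on K G0" "continuous_on K G1"
    and "monotone_on_K G0 K" "monotone_on_K G1 K" "t \<in> {0..1}"
  shows "connected (VI_Sol (linear_homotopy G0 G1 t) K)"
  using assms by (intro convex_connected convex_VI_Sol continuous_on_linear_homotopy
      monotone_on_K_linear_homotopy)

lemma VI_Sol_linear_homotopy_closed_graph:
  fixes K :: "'a::euclidean_space set"
  assumes "closed K" "continuous_on K G0" "continuous_on K G1"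
    and "\<And>n. x n \<in> VI_Sol (linear_homotopy G0 G1 (t n)) K" "t \<longlonglongrightarrow> t0" "x \<longlonglongrightarrow> x0"
  shows "x0 \<in> VI_Sol (linear_homotopy G0 G1 t0) K"
proof -
  have xK: "\<forall>n. x n \<in> K" using assms(4) VI_Sol_subset by blast
  then have x0K: "x0 \<in> K" using closed_sequentially[OF assms(1) _ assms(6)] by auto
  have "(\<lambda>n. G0 (x n)) \<longlonglongrightarrow> G0 x0" "(\<lambda>n. G1 (x n)) \<longlonglongrightarrow> G1 x0"
    using assms(2,3,6) x0K xK unfolding continuous_on_sequentially comp_def by auto
  then have lim: "(\<lambda>n. linear_homotopy G0 G1 (t n) (x n) \<bullet> (y - x n))
      \<longlonglongrightarrow> linear_homotopy G0 G1 t0 x0 \<bullet> (y - x0)" for y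
    unfolding linear_homotopy_def by (intro tendsto_intros assms(5,6))
  have "linear_homotopy G0 G1 t0 x0 \<bullet> (y - x0) \<ge> 0" if "y \<in> K" for y
  proof (rule LIMSEQ_le_const[OF lim])
    show "\<exists>N. \<forall>n\<ge>N. 0 \<le> linear_homotopy G0 G1 (t n) (x n) \<bullet> (y - x n)"
      using assms(4) that unfolding VI_Sol_def by auto
  qed
  then show ?thesis using x0K unfolding VI_Sol_def by auto
qed

lemma closed_linear_homotopy_VI_Sol_meets:
  fixes K :: "'a::euclidean_space set"
  assumes "closed K" "continuous_on K G0" "continuous_on K G1" "compact E"
  shows "closed {t. VI_Sol (linear_homotopy G0 G1 t) K \<inter> E \<noteq> {}}"
  unfolding closed_sequential_limits
proof (intro allI impI, elim conjE)
  fix s l assume s: "\<forall>n. s n \<in> {t. VI_Sol (linear_homotopy G0 G1 t) K \<inter> E \<noteq> {}}"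
    and sl: "s \<longlonglongrightarrow> l"
  obtain x where x: "\<And>n. x n \<in> VI_Sol (linear_homotopy G0 G1 (s n)) K" "\<And>n. x n \<in> E"
  proof -
    have "\<forall>n. \<exists>y. y \<in> VI_Sol (linear_homotopy G0 G1 (s n)) K \<and> y \<in> E" using s by blast
    then show ?thesis using that by metis
  qed
  then obtain z r where z: "z \<in> E" "strict_mono r" "(x \<circ> r) \<longlonglongrightarrow> z"
    using compact_imp_seq_compact[OF assms(4)] unfolding seq_compact_def by blast
  have "z \<in> VI_Sol (linear_homotopy G0 G1 l) K"
    by (rule VI_Sol_linear_homotopy_closed_graph[OF assms(1-3), of "x \<circ> r" "s \<circ> r"])
      (use x(1) LIMSEQ_subseq_LIMSEQ[OF sl z(2)] z(3) in auto)
  then show "l \<in> {t. VI_Sol (linear_homotopy G0 G1 t) K \<inter> E \<noteq> {}}" using z(1) by auto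
qed

lemma VI_Sol_linear_homotopy_locally_bounded:
  fixes K :: "'a::euclidean_space set"
  assumes K: "closed K" "convex K"
    and G: "continuous_on K G0" "continuous_on K G1" "monotone_on_K G0 K" "monotone_on_K G1 K"
    and t0: "t0 \<in> {0..1}" "VI_Sol (linear_homotopy G0 G1 t0) K \<noteq> {}"
      "bounded (VI_Sol (linear_homotopy G0 G1 t0) K)"
  shows "\<exists>\<delta>>0. \<exists>R. \<forall>t\<in>{0..1}. \<bar>t - t0\<bar> < \<delta> \<longrightarrow>
           VI_Sol (linear_homotopy G0 G1 t) K \<noteq> {} \<and> VI_Sol (linear_homotopy G0 G1 t) K \<subseteq> cball 0 R"
proof -
  let ?H = "linear_homotopy G0 G1"
  obtain r where r: "VI_Sol (?H t0) K \<subseteq> ball 0 r"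
    using bounded_subset_ballD[OF t0(3)] by blast
  define R where "R = r + 1"
  let ?KR = "K \<inter> cball 0 R"
  let ?O = "{t. VI_Sol (?H t) ?KR \<inter> sphere 0 R \<noteq> {}}"
  have "closed ?O"
    using K(1) G(1,2) by (intro closed_linear_homotopy_VI_Sol_meets) (auto intro: continuous_on_subset)
  moreover have "t0 \<notin> ?O"
    using VI_Sol_Int_cball_sphere_free[OF K(2) continuous_on_linear_homotopy[OF G(1,2)]
        monotone_on_K_linear_homotopy[OF G(3,4) t0(1)] t0(2) r] R_def by auto
  ultimately obtain \<delta> where \<delta>: "\<delta> > 0" "\<And>t. dist t t0 < \<delta> \<Longrightarrow> t \<notin> ?O"
    unfolding closed_def open_dist by blast
  have "?KR \<noteq> {}" using t0(2) r VI_Sol_subset R_def by fastforce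
  then have "VI_Sol (?H t) K \<noteq> {} \<and> VI_Sol (?H t) K \<subseteq> cball 0 R"
    if "t \<in> {0..1}" "\<bar>t - t0\<bar> < \<delta>" for t
    using \<delta>(2)[of t] that
    by (intro VI_Sol_nonempty_bounded_if_sphere_free[OF K continuous_on_linear_homotopy[OF G(1,2)]
        monotone_on_K_linear_homotopy[OF G(3,4)]]) (auto simp: dist_real_def)
  then show ?thesis using \<delta>(1) by blast
qed

lemma connected_UN_if_closedin_meets:
  assumes "connected I"
    and "\<And>t. t \<in> I \<Longrightarrow> connected (\<Psi> t)" "\<And>t. t \<in> I \<Longrightarrow> \<Psi> t \<noteq> {}"
    and "\<And>E. closed E \<Longrightarrow> closedin (top_of_set I) {t\<in>I. \<Psi> t \<inter> E \<noteq> {}}"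
  shows "connected (\<Union>t\<in>I. \<Psi> t)"
proof (rule ccontr)
  define U where "U = (\<Union>t\<in>I. \<Psi> t)"
  let ?meets = "\<lambda>E. {t\<in>I. \<Psi> t \<inter> E \<noteq> {}}"
  assume "\<not> connected (\<Union>t\<in>I. \<Psi> t)"
  then have "\<not> connected U" unfolding U_def .
  then obtain A B where AB: "closed A" "closed B" "U \<subseteq> A \<union> B" "A \<inter> B \<inter> U = {}"
    "A \<inter> U \<noteq> {}" "B \<inter> U \<noteq> {}"
    unfolding connected_closed by blast
  have "\<Psi> t \<inter> A = {} \<or> \<Psi> t \<inter> B = {}" if t: "t \<in> I" for t
  proof (rule ccontr)
    assume "\<not> (\<Psi> t \<inter> A = {} \<or> \<Psi> t \<inter> B = {})"
    then have "A \<inter> \<Psi> t \<noteq> {}" "B \<inter> \<Psi> t \<noteq> {}" by auto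
    moreover have "\<Psi> t \<subseteq> A \<union> B" "A \<inter> B \<inter> \<Psi> t = {}" using t AB(3,4) unfolding U_def by auto
    ultimately show False using assms(2)[OF t] AB(1,2) unfolding connected_closed by blast
  qed
  then have "?meets A \<inter> ?meets B = {}" by blast
  moreover have "I \<subseteq> ?meets A \<union> ?meets B"
  proof
    fix t assume t: "t \<in> I"
    then have "\<Psi> t \<subseteq> A \<union> B" using AB(3) unfolding U_def by auto
    then show "t \<in> ?meets A \<union> ?meets B" using assms(3)[OF t] t by auto
  qed
  moreover have "?meets A \<noteq> {}" "?meets B \<noteq> {}" using AB(5,6) unfolding U_def by auto
  ultimately have "\<not> connected I"
    using assms(4)[OF AB(1)] assms(4)[OF AB(2)] unfolding connected_closedin by blast
  then show False using assms(1) by contradiction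
qed

lemma connected_UN_VI_Sol_linear_homotopy:
  fixes K :: "'a::euclidean_space set"
  assumes K: "closed K" "convex K"
    and G: "continuous_on K G0" "continuous_on K G1" "monotone_on_K G0 K" "monotone_on_K G1 K"
    and ab: "{a..b} \<subseteq> {0..1}"
    and bound: "\<And>t. t \<in> {a..b} \<Longrightarrow>
      VI_Sol (linear_homotopy G0 G1 t) K \<noteq> {} \<and> VI_Sol (linear_homotopy G0 G1 t) K \<subseteq> cball 0 R"
  shows "connected (\<Union>t\<in>{a..b}. VI_Sol (linear_homotopy G0 G1 t) K)"
proof (rule connected_UN_if_closedin_meets)
  fix t assume "t \<in> {a..b}"
  then show "connected (VI_Sol (linear_homotopy G0 G1 t) K)"
    using ab by (intro connected_VI_Sol_linear_homotopy[OF K(2) G]) auto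
  show "VI_Sol (linear_homotopy G0 G1 t) K \<noteq> {}" using bound \<open>t \<in> {a..b}\<close> by blast
next
  fix E :: "'a set" assume "closed E"
  then have "closed {t. VI_Sol (linear_homotopy G0 G1 t) K \<inter> (E \<inter> cball 0 R) \<noteq> {}}"
    by (intro closed_linear_homotopy_VI_Sol_meets[OF K(1) G(1,2)] closed_Int_compact) auto
  moreover have "{t\<in>{a..b}. VI_Sol (linear_homotopy G0 G1 t) K \<inter> E \<noteq> {}}
      = {a..b} \<inter> {t. VI_Sol (linear_homotopy G0 G1 t) K \<inter> (E \<inter> cball 0 R) \<noteq> {}}"
    using bound by blast
  ultimately show "closedin (top_of_set {a..b}) {t\<in>{a..b}. VI_Sol (linear_homotopy G0 G1 t) K \<inter> E \<noteq> {}}"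
    by (simp add: closedin_closed_Int)
qed simp

lemma connected_subset_connected_component:
  assumes "connected U" "U \<subseteq> S" "U \<inter> connected_component_set S x \<noteq> {}"
  shows "U \<subseteq> connected_component_set S x"
proof -
  obtain y where y: "y \<in> U" "y \<in> connected_component_set S x" using assms(3) by blast
  have "U \<subseteq> connected_component_set S y" by (rule connected_component_maximal[OF y(1) assms(1,2)])
  then show ?thesis using connected_component_eq[OF y(2)] by simp
qed

lemma closedin_linear_homotopy_meets_component:
  fixes K :: "'a::euclidean_space set"
  assumes "closed K" "continuous_on K G0" "continuous_on K G1"
    and "\<And>t. t \<in> {0..1} \<Longrightarrow> VI_Sol (linear_homotopy G0 G1 t) K \<subseteq> S"
    and "bounded (connected_component_set S x)"
  shows "closedin (top_of_set {0..1})
    {t\<in>{0..1}. VI_Sol (linear_homotopy G0 G1 t) K \<inter> connected_component_set S x \<noteq> {}}"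
proof -
  let ?C = "connected_component_set S x"
  obtain E where E: "closed E" "?C = S \<inter> E"
    using closedin_connected_component[of S x] unfolding closedin_closed by blast
  then have "closure ?C \<subseteq> E" by (simp add: closure_minimal)
  then have "S \<inter> closure ?C = ?C" using E(2) closure_subset[of ?C] by blast
  then have "{t\<in>{0..1}. VI_Sol (linear_homotopy G0 G1 t) K \<inter> ?C \<noteq> {}}
      = {0..1} \<inter> {t. VI_Sol (linear_homotopy G0 G1 t) K \<inter> closure ?C \<noteq> {}}"
    using assms(4) by blast
  moreover have "closed {t. VI_Sol (linear_homotopy G0 G1 t) K \<inter> closure ?C \<noteq> {}}"
    using assms(5) by (intro closed_linear_homotopy_VI_Sol_meets[OF assms(1-3)] compact_closure[THEN iffD2])
  ultimately show ?thesis by (simp add: closedin_closed_Int)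
qed

lemma openin_linear_homotopy_meets_component:
  fixes K :: "'a::euclidean_space set"
  assumes K: "closed K" "convex K"
    and G: "continuous_on K G0" "continuous_on K G1" "monotone_on_K G0 K" "monotone_on_K G1 K"
    and S: "\<And>t. t \<in> {0..1} \<Longrightarrow> VI_Sol (linear_homotopy G0 G1 t) K \<subseteq> S"
    and "bounded (connected_component_set S x)"
  shows "openin (top_of_set {0..1})
    {t\<in>{0..1}. VI_Sol (linear_homotopy G0 G1 t) K \<inter> connected_component_set S x \<noteq> {}}"
  unfolding openin_euclidean_subtopology_iff
proof (intro conjI ballI)
  let ?C = "connected_component_set S x"
  let ?\<Psi> = "\<lambda>t. VI_Sol (linear_homotopy G0 G1 t) K"
  fix t assume "t \<in> {t\<in>{0..1}. ?\<Psi> t \<inter> ?C \<noteq> {}}"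
  then have t: "t \<in> {0..1}" "?\<Psi> t \<inter> ?C \<noteq> {}" by auto
  then have "?\<Psi> t \<subseteq> ?C"
    using connected_VI_Sol_linear_homotopy[OF K(2) G] S by (intro connected_subset_connected_component)
  then have "bounded (?\<Psi> t)" using assms(8) by (rule bounded_subset[rotated])
  moreover have "?\<Psi> t \<noteq> {}" using t(2) by blast
  ultimately obtain \<delta> R where \<delta>: "\<delta> > 0"
    "\<And>s. s \<in> {0..1} \<Longrightarrow> \<bar>s - t\<bar> < \<delta> \<Longrightarrow> ?\<Psi> s \<noteq> {} \<and> ?\<Psi> s \<subseteq> cball 0 R"
    using VI_Sol_linear_homotopy_locally_bounded[OF K G t(1)] by blast
  show "\<exists>e>0. \<forall>t'\<in>{0..1}. dist t' t < e \<longrightarrow> t' \<in> {t\<in>{0..1}. ?\<Psi> t \<inter> ?C \<noteq> {}}"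
  proof (intro exI[of _ \<delta>] conjI ballI impI)
    fix t' assume t': "t' \<in> {0..1}" "dist t' t < \<delta>"
    let ?J = "{min t t'..max t t'}"
    have J: "?J \<subseteq> {0..1}" using t(1) t'(1) by auto
    have "?\<Psi> s \<noteq> {} \<and> ?\<Psi> s \<subseteq> cball 0 R" if "s \<in> ?J" for s
    proof (rule \<delta>(2))
      show "s \<in> {0..1}" using that J by blast
      show "\<bar>s - t\<bar> < \<delta>" using that t'(2) unfolding dist_real_def by auto
    qed
    then have "connected (\<Union>s\<in>?J. ?\<Psi> s)" by (rule connected_UN_VI_Sol_linear_homotopy[OF K G J])
    moreover have "(\<Union>s\<in>?J. ?\<Psi> s) \<subseteq> S" using J S by blast
    moreover have "?\<Psi> t \<subseteq> (\<Union>s\<in>?J. ?\<Psi> s)" by (intro UN_upper) auto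
    ultimately have "(\<Union>s\<in>?J. ?\<Psi> s) \<subseteq> ?C"
      using t(2) by (intro connected_subset_connected_component) blast+
    moreover have "?\<Psi> t' \<subseteq> (\<Union>s\<in>?J. ?\<Psi> s)" by (intro UN_upper) auto
    moreover have "?\<Psi> t' \<noteq> {}" using \<delta>(2)[OF t'(1)] t'(2) by (simp add: dist_real_def)
    ultimately show "t' \<in> {t\<in>{0..1}. ?\<Psi> t \<inter> ?C \<noteq> {}}" using t'(1) by blast
  qed (rule \<delta>(1))
qed blast

lemma continuous_on_F_xi:
  fixes F :: "nat \<Rightarrow> 'a::real_normed_vector \<Rightarrow> 'a"
  assumes "\<And>l. l < m \<Longrightarrow> continuous_on K (F l)"
  shows "continuous_on K (F_xi m F \<xi>)"
  unfolding F_xi_def by (intro continuous_intros assms) auto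

lemma monotone_on_K_F_xi:
  assumes "\<And>l. l < m \<Longrightarrow> monotone_on_K (F l) K" "\<xi> \<in> ri_simplex m"
  shows "monotone_on_K (F_xi m F \<xi>) K"
  unfolding monotone_on_K_def
proof (intro ballI)
  fix x y assume x: "x \<in> K" and y: "y \<in> K"
  have "(F_xi m F \<xi> y - F_xi m F \<xi> x) \<bullet> (y - x) = (\<Sum>l<m. \<xi> l * ((F l y - F l x) \<bullet> (y - x)))"
    unfolding F_xi_def by (simp add: sum_subtractf[symmetric] inner_sum_left scaleR_diff_right[symmetric])
  also have "\<dots> \<ge> 0" using assms x y unfolding monotone_on_K_def ri_simplex_def
    by (intro sum_nonneg mult_nonneg_nonneg) (auto simp: less_imp_le)
  finally show "0 \<le> (F_xi m F \<xi> y - F_xi m F \<xi> x) \<bullet> (y - x)" .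
qed

lemma ri_simplex_convex_combination:
  assumes "\<xi>0 \<in> ri_simplex m" "\<xi>1 \<in> ri_simplex m" "t \<in> {0..1}"
  shows "(\<lambda>l. (1 - t) * \<xi>0 l + t * \<xi>1 l) \<in> ri_simplex m"
proof -
  have "(1 - t) * \<xi>0 l + t * \<xi>1 l > 0" if "l < m" for l
  proof (cases "t = 0")
    case True
    then show ?thesis using assms that unfolding ri_simplex_def by simp
  next
    case False
    then have "t * \<xi>1 l > 0" using assms that unfolding ri_simplex_def by simp
    moreover have "(1 - t) * \<xi>0 l \<ge> 0" using assms that unfolding ri_simplex_def by (simp add: less_imp_le)
    ultimately show ?thesis by linarith
  qed
  moreover have "(\<Sum>l<m. (1 - t) * \<xi>0 l + t * \<xi>1 l) = 1"
    using assms unfolding ri_simplex_def by (simp add: sum.distrib sum_distrib_left[symmetric])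
  ultimately show ?thesis unfolding ri_simplex_def by simp
qed

lemma F_xi_convex_combination:
  "F_xi m F (\<lambda>l. (1 - t) * \<xi>0 l + t * \<xi>1 l) = linear_homotopy (F_xi m F \<xi>0) (F_xi m F \<xi>1) t"
  unfolding F_xi_def linear_homotopy_def
  by (rule ext) (simp add: scaleR_add_left sum.distrib scaleR_sum_right)

lemma VI_Sol_F_xi_subset_bounded_component:
  fixes K :: "'n::euclidean_space set"
  assumes K: "closed K" "convex K"
    and F: "\<And>l. l < m \<Longrightarrow> continuous_on K (F l)" "\<And>l. l < m \<Longrightarrow> monotone_on_K (F l) K"
    and \<xi>: "\<xi>0 \<in> ri_simplex m" "\<xi>1 \<in> ri_simplex m"
    and x: "x \<in> VI_Sol (F_xi m F \<xi>0) K"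
    and bounded: "bounded (connected_component_set (Sol_pr m F K) x)"
  shows "VI_Sol (F_xi m F \<xi>1) K \<subseteq> connected_component_set (Sol_pr m F K) x"
proof -
  let ?S = "Sol_pr m F K" and ?C = "connected_component_set (Sol_pr m F K) x"
  let ?\<Psi> = "\<lambda>t. VI_Sol (linear_homotopy (F_xi m F \<xi>0) (F_xi m F \<xi>1) t) K"
  have G: "continuous_on K (F_xi m F \<xi>0)" "continuous_on K (F_xi m F \<xi>1)"
    "monotone_on_K (F_xi m F \<xi>0) K" "monotone_on_K (F_xi m F \<xi>1) K"
    using continuous_on_F_xi[of m K F] monotone_on_K_F_xi[of m F K] F \<xi> by blast+
  have S: "?\<Psi> t \<subseteq> ?S" if "t \<in> {0..1}" for t
  proof -
    have "(\<lambda>l. (1 - t) * \<xi>0 l + t * \<xi>1 l) \<in> ri_simplex m"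
      using \<xi> that by (rule ri_simplex_convex_combination)
    then show ?thesis unfolding Sol_pr_def F_xi_convex_combination[symmetric] by blast
  qed
  let ?T = "{t\<in>{0..1}. ?\<Psi> t \<inter> ?C \<noteq> {}}"
  have "x \<in> ?S" using x \<xi>(1) unfolding Sol_pr_def by blast
  then have "0 \<in> ?T" using x by auto
  moreover have "?T = {} \<or> ?T = {0..1}"
    using connected_Icc[of "0::real" 1] closedin_linear_homotopy_meets_component[OF K(1) G(1,2) S bounded]
      openin_linear_homotopy_meets_component[OF K G S bounded]
    unfolding connected_clopen by blast
  ultimately have "?T = {0..1}" by blast
  then have "1 \<in> ?T" by (metis atLeastAtMost_iff order_refl zero_le_one)
  then have "?\<Psi> 1 \<inter> ?C \<noteq> {}" by blast
  moreover have "connected (?\<Psi> 1)" by (rule connected_VI_Sol_linear_homotopy[OF K(2) G]) simp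
  ultimately have "?\<Psi> 1 \<subseteq> ?C"
    using S[of 1] by (intro connected_subset_connected_component) auto
  then show ?thesis by simp
qed

theorem theorem4:
  fixes K :: "'n::euclidean_space set" and F :: "nat \<Rightarrow> 'n \<Rightarrow> 'n" and m :: nat
  assumes "K \<noteq> {}" and "closed K" and "convex K"
    and "\<And>l. l < m \<Longrightarrow> continuous_on K (F l)"
    and "\<And>l. l < m \<Longrightarrow> monotone_on_K (F l) K"
  shows "(\<not> connected (Sol_pr m F K) \<longrightarrow>
            (\<forall>x\<in>Sol_pr m F K. \<not> bounded (connected_component_set (Sol_pr m F K) x)))
       \<and> (bounded (Sol_pr m F K) \<and> Sol_pr m F K \<noteq> {} \<longrightarrow> connected (Sol_pr m F K))"
proof -
  let ?S = "Sol_pr m F K"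
  have component_unbounded: "\<not> bounded (connected_component_set ?S x)"
    if "\<not> connected ?S" "x \<in> ?S" for x
  proof
    assume bounded: "bounded (connected_component_set ?S x)"
    obtain \<xi>0 where \<xi>0: "\<xi>0 \<in> ri_simplex m" "x \<in> VI_Sol (F_xi m F \<xi>0) K"
      using \<open>x \<in> ?S\<close> unfolding Sol_pr_def by blast
    have "VI_Sol (F_xi m F \<xi>) K \<subseteq> connected_component_set ?S x" if "\<xi> \<in> ri_simplex m" for \<xi>
      using VI_Sol_F_xi_subset_bounded_component[OF assms(2-5) \<xi>0(1) that \<xi>0(2) bounded] .
    then have "?S \<subseteq> connected_component_set ?S x" by (subst (1) Sol_pr_def) blast
    then have "connected ?S"
      by (metis connected_component_subset connected_connected_component subset_antisym)
    with that(1) show False by contradiction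
  qed
  moreover have "connected ?S" if "bounded ?S" "?S \<noteq> {}"
    using component_unbounded bounded_subset[OF that(1) connected_component_subset] that(2) by blast
  ultimately show ?thesis by blast
qed

end
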